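(* Let $T:M_d\to M_d$ be completely positive with $T(I)\le I$ and finite stabilization index $n_T$, and let $Q_T$ be its orbit-support projection. Suppose that for every nonzero projection $0\ne p\le Q_T$ we have $T(p)\ne0$. Then $T$ is corner-faithful, and hence $T$ is unital ($T(I)=I$).
   Context: $d(T)=I-T(I)$; the stabilization index is $n_T=\min\{n\ge1: T^n(d(T))=0\}$. For positive semidefinite $x$, $\mathrm{supp}(x)$ is the orthogonal projection onto the range of $x$. The orbit-support projection is $Q_T=\bigvee_{k<n_T}\mathrm{supp}(T^k(d(T)))$. $T$ is corner-faithful if every $x\ge0$, $x\ne0$ with $\mathrm{supp}(x)\le Q_T$ satisfies $T(x)\ne0$. *)

theory Defs
  imports "Jordan_Normal_Form.Schur_Decomposition"
begin

definition hermitian_mat :: "nat \<Rightarrow> complex mat \<Rightarrow> bool" where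
  "hermitian_mat n A \<longleftrightarrow> A \<in> carrier_mat n n \<and> mat_adjoint A = A"

definition psd_mat :: "nat \<Rightarrow> complex mat \<Rightarrow> bool" where
  "psd_mat n A \<longleftrightarrow> hermitian_mat n A \<and>
     (\<forall>v :: nat \<Rightarrow> complex. 0 \<le> Re (\<Sum>i<n. \<Sum>j<n. cnj (v i) * A $$ (i,j) * v j)
                           \<and> Im (\<Sum>i<n. \<Sum>j<n. cnj (v i) * A $$ (i,j) * v j) = 0)"

definition loewner_le :: "nat \<Rightarrow> complex mat \<Rightarrow> complex mat \<Rightarrow> bool" where
  "loewner_le n A B \<longleftrightarrow> A \<in> carrier_mat n n \<and> B \<in> carrier_mat n n \<and> psd_mat n (B - A)"

definition proj_mat :: "nat \<Rightarrow> complex mat \<Rightarrow> bool" where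
  "proj_mat n P \<longleftrightarrow> P \<in> carrier_mat n n \<and> P * P = P \<and> mat_adjoint P = P"

definition mat_range :: "nat \<Rightarrow> complex mat \<Rightarrow> complex vec set" where
  "mat_range n A = {A *\<^sub>v v | v. v \<in> carrier_vec n}"

definition supp :: "nat \<Rightarrow> complex mat \<Rightarrow> complex mat" where
  "supp n x = (THE P. proj_mat n P \<and> mat_range n P = mat_range n x)"

definition proj_join :: "nat \<Rightarrow> complex mat set \<Rightarrow> complex mat" where
  "proj_join n S = (THE Q. proj_mat n Q \<and> (\<forall>P\<in>S. loewner_le n P Q) \<and>
      (\<forall>R. proj_mat n R \<and> (\<forall>P\<in>S. loewner_le n P R) \<longrightarrow> loewner_le n Q R))"

definition linear_map_mat :: "nat \<Rightarrow> (complex mat \<Rightarrow> complex mat) \<Rightarrow> bool" where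
  "linear_map_mat n T \<longleftrightarrow>
     (\<forall>A\<in>carrier_mat n n. T A \<in> carrier_mat n n) \<and>
     (\<forall>A\<in>carrier_mat n n. \<forall>B\<in>carrier_mat n n. T (A + B) = T A + T B) \<and>
     (\<forall>A\<in>carrier_mat n n. \<forall>c. T (c \<cdot>\<^sub>m A) = c \<cdot>\<^sub>m T A)"

definition mat_block :: "nat \<Rightarrow> nat \<Rightarrow> nat \<Rightarrow> complex mat \<Rightarrow> complex mat" where
  "mat_block n a b X = mat n n (\<lambda>(r,s). X $$ (a*n + r, b*n + s))"

(* ampliation id_k \<otimes> T acting blockwise on M_k(M_n) \<cong> M_{kn} *)
definition ampliation :: "nat \<Rightarrow> nat \<Rightarrow> (complex mat \<Rightarrow> complex mat) \<Rightarrow> complex mat \<Rightarrow> complex mat" where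
  "ampliation k n T X = mat (k*n) (k*n)
     (\<lambda>(i,j). T (mat_block n (i div n) (j div n) X) $$ (i mod n, j mod n))"

definition completely_positive :: "nat \<Rightarrow> (complex mat \<Rightarrow> complex mat) \<Rightarrow> bool" where
  "completely_positive n T \<longleftrightarrow> linear_map_mat n T \<and>
     (\<forall>k\<ge>1. \<forall>X. psd_mat (k*n) X \<longrightarrow> psd_mat (k*n) (ampliation k n T X))"

definition defect :: "nat \<Rightarrow> (complex mat \<Rightarrow> complex mat) \<Rightarrow> complex mat" where
  "defect n T = 1\<^sub>m n - T (1\<^sub>m n)"

definition finite_stab_index :: "nat \<Rightarrow> (complex mat \<Rightarrow> complex mat) \<Rightarrow> bool" where
  "finite_stab_index n T \<longleftrightarrow> (\<exists>m\<ge>1. (T ^^ m) (defect n T) = 0\<^sub>m n n)"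

definition stab_index :: "nat \<Rightarrow> (complex mat \<Rightarrow> complex mat) \<Rightarrow> nat" where
  "stab_index n T = (LEAST m. m \<ge> 1 \<and> (T ^^ m) (defect n T) = 0\<^sub>m n n)"

definition orbit_support :: "nat \<Rightarrow> (complex mat \<Rightarrow> complex mat) \<Rightarrow> complex mat" where
  "orbit_support n T = proj_join n {supp n ((T ^^ k) (defect n T)) | k. k < stab_index n T}"

definition corner_faithful :: "nat \<Rightarrow> (complex mat \<Rightarrow> complex mat) \<Rightarrow> bool" where
  "corner_faithful n T \<longleftrightarrow>
     (\<forall>x. psd_mat n x \<and> x \<noteq> 0\<^sub>m n n \<and> loewner_le n (supp n x) (orbit_support n T)
          \<longrightarrow> T x \<noteq> 0\<^sub>m n n)"

end

theory Submission
  imports Defs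
begin

(* Since T(I) <= I, the defect d(T) is positive semidefinite, and so is every iterate
   T^k(d(T)). If d(T) were nonzero, the last nonzero iterate x = T^(n_T - 1)(d(T)) would satisfy
   T(x) = 0 and supp(x) <= Q_T. Any nonzero column u of x spans a rank-one projection
   p <= supp(x) <= Q_T, and Cauchy-Schwarz gives u u^* <= x_jj x; positivity of T then forces
   T(p) = 0, against the hypothesis. Hence d(T) = 0, i.e. T is unital; then n_T = 1 and
   Q_T = supp(0) = 0, so corner-faithfulness holds vacuously.

   The support and the join, defined by THE, exist because the orthogonal projection onto the
   span of finitely many vectors can be built by Gram-Schmidt. *)

section \<open>Matrix and vector identities\<close>

lemma dim_mat_adjoint [simp]:
  "dim_row (mat_adjoint A) = dim_col A" "dim_col (mat_adjoint A) = dim_row A"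
  by (auto simp: mat_adjoint_def mat_of_rows_def)

lemma index_mat_adjoint [simp]:
  "i < dim_col A \<Longrightarrow> j < dim_row A \<Longrightarrow> mat_adjoint A $$ (i,j) = cnj (A $$ (j,i))"
  by (auto simp: mat_adjoint_def mat_of_rows_def)

lemma row_scalar_prod_sum:
  "A \<in> carrier_mat n k \<Longrightarrow> v \<in> carrier_vec k \<Longrightarrow> i < n \<Longrightarrow>
   row A i \<bullet> v = (\<Sum>l<k. A $$ (i,l) * v $ l)"
  by (auto simp: scalar_prod_def atLeast0LessThan intro!: sum.cong)

lemma row_col_scalar_prod_sum:
  "A \<in> carrier_mat n k \<Longrightarrow> B \<in> carrier_mat k m \<Longrightarrow> i < n \<Longrightarrow> j < m \<Longrightarrow>
   row A i \<bullet> col B j = (\<Sum>l<k. A $$ (i,l) * B $$ (l,j))"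
  by (auto simp: scalar_prod_def atLeast0LessThan intro!: sum.cong)

lemma index_mult_mat_sum:
  "A \<in> carrier_mat n k \<Longrightarrow> B \<in> carrier_mat k m \<Longrightarrow> i < n \<Longrightarrow> j < m \<Longrightarrow>
   (A * B) $$ (i,j) = (\<Sum>l<k. A $$ (i,l) * B $$ (l,j))"
  by (auto simp: scalar_prod_def atLeast0LessThan intro!: sum.cong)

lemma cscalar_prod_sum:
  "v \<in> carrier_vec n \<Longrightarrow> w \<in> carrier_vec n \<Longrightarrow> v \<bullet>c w = (\<Sum>i<n. v $ i * cnj (w $ i))"
  by (auto simp: scalar_prod_def atLeast0LessThan intro!: sum.cong)

lemma mat_adjoint_mult:
  fixes A B :: "complex mat"
  assumes A: "A \<in> carrier_mat n k" and B: "B \<in> carrier_mat k m"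
  shows "mat_adjoint (A * B) = mat_adjoint B * mat_adjoint A"
proof (rule eq_matI)
  fix i j assume "i < dim_row (mat_adjoint B * mat_adjoint A)" "j < dim_col (mat_adjoint B * mat_adjoint A)"
  then have ij: "i < m" "j < n" using A B by auto
  have "mat_adjoint (A * B) $$ (i,j) = cnj ((A * B) $$ (j,i))"
    using A B ij by simp
  also have "\<dots> = (\<Sum>l<k. cnj (B $$ (l,i)) * cnj (A $$ (j,l)))"
    unfolding index_mult_mat_sum[OF A B ij(2) ij(1)] cnj_sum complex_cnj_mult by (simp add: mult.commute)
  also have "\<dots> = (\<Sum>l<k. mat_adjoint B $$ (i,l) * mat_adjoint A $$ (l,j))"
    by (intro sum.cong refl) (use A B ij in simp)
  also have "\<dots> = (mat_adjoint B * mat_adjoint A) $$ (i,j)"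
    by (rule index_mult_mat_sum[symmetric]) (use A B ij in auto)
  finally show "mat_adjoint (A * B) $$ (i,j) = (mat_adjoint B * mat_adjoint A) $$ (i,j)" .
qed (use A B in auto)

lemma eq_mat_if_mult_vec_eq:
  fixes A B :: "complex mat"
  assumes "A \<in> carrier_mat n n" "B \<in> carrier_mat n n"
    and "\<And>v. v \<in> carrier_vec n \<Longrightarrow> A *\<^sub>v v = B *\<^sub>v v"
  shows "A = B"
proof (rule eq_matI)
  fix i j assume "i < dim_row B" "j < dim_col B"
  with assms(1,2) have "A $$ (i,j) = (A *\<^sub>v unit_vec n j) $ i" "B $$ (i,j) = (B *\<^sub>v unit_vec n j) $ i"
    by auto
  then show "A $$ (i,j) = B $$ (i,j)" using assms(3)[of "unit_vec n j"] by simp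
qed (use assms in auto)

lemma mult_mat_eq_if_fixes_cols:
  fixes A B :: "complex mat"
  assumes "A \<in> carrier_mat n n" "B \<in> carrier_mat n n"
    and "\<And>j. j < n \<Longrightarrow> A *\<^sub>v col B j = col B j"
  shows "A * B = B"
proof (rule eq_matI)
  fix i j assume "i < dim_row B" "j < dim_col B"
  with assms(1,2) have "(A * B) $$ (i,j) = (A *\<^sub>v col B j) $ i" "B $$ (i,j) = col B j $ i"
    by auto
  then show "(A * B) $$ (i,j) = B $$ (i,j)" using assms(3) \<open>j < dim_col B\<close> assms(2) by simp
qed (use assms in auto)

lemma set_cols_carrier: "x \<in> carrier_mat n m \<Longrightarrow> set (cols x) = {col x j | j. j < m}"
  unfolding cols_def by auto

lemma eq_vec_if_diff_eq_0:
  fixes a b :: "complex vec"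
  assumes "a \<in> carrier_vec n" "b \<in> carrier_vec n" "a - b = 0\<^sub>v n"
  shows "a = b"
proof (rule eq_vecI)
  fix i assume i: "i < dim_vec b"
  have "a $ i - b $ i = (a - b) $ i" using assms(1,2) i by simp
  also have "\<dots> = 0" using assms i by simp
  finally show "a $ i = b $ i" by simp
qed (use assms in simp)

lemma mult_mat_vec_add_smult:
  fixes A :: "complex mat"
  assumes "A \<in> carrier_mat n n" "a \<in> carrier_vec n" "b \<in> carrier_vec n"
  shows "A *\<^sub>v (a + c \<cdot>\<^sub>v b) = A *\<^sub>v a + c \<cdot>\<^sub>v (A *\<^sub>v b)"
  using assms
  by (intro eq_vecI) (auto simp: row_scalar_prod_sum[of _ n n] algebra_simps sum.distrib sum_distrib_left)

lemma cscalar_prod_add_smult: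
  fixes a b w :: "complex vec"
  assumes "a \<in> carrier_vec n" "b \<in> carrier_vec n" "w \<in> carrier_vec n"
  shows "(a + c \<cdot>\<^sub>v b) \<bullet>c w = a \<bullet>c w + c * (b \<bullet>c w)"
  using assms by (simp add: cscalar_prod_sum[of _ n] algebra_simps sum.distrib sum_distrib_left)

lemma mult_mat_vec_zero [simp]: "(A :: complex mat) \<in> carrier_mat n n \<Longrightarrow> A *\<^sub>v 0\<^sub>v n = 0\<^sub>v n"
  by (intro eq_vecI) (auto simp: row_scalar_prod_sum[of _ n n])

lemma zero_mult_mat_vec [simp]: "v \<in> carrier_vec n \<Longrightarrow> (0\<^sub>m n n :: complex mat) *\<^sub>v v = 0\<^sub>v n"
  by (intro eq_vecI) (auto simp: row_scalar_prod_sum[of _ n n])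

definition outer_mat :: "nat \<Rightarrow> complex vec \<Rightarrow> complex mat"
  where "outer_mat n w = mat n n (\<lambda>(i,k). w $ i * cnj (w $ k))"

lemma outer_mat_carrier [simp]: "outer_mat n w \<in> carrier_mat n n"
  by (simp add: outer_mat_def)

lemma dim_outer_mat [simp]: "dim_row (outer_mat n w) = n" "dim_col (outer_mat n w) = n"
  by (simp_all add: outer_mat_def)

lemma index_outer_mat [simp]: "i < n \<Longrightarrow> k < n \<Longrightarrow> outer_mat n w $$ (i,k) = w $ i * cnj (w $ k)"
  by (simp add: outer_mat_def)

lemma add_smult_outer_mat_mult_vec:
  fixes P :: "complex mat"
  assumes "P \<in> carrier_mat n n" "w \<in> carrier_vec n" "z \<in> carrier_vec n"
  shows "(P + c \<cdot>\<^sub>m outer_mat n w) *\<^sub>v z = P *\<^sub>v z + (c * (z \<bullet>c w)) \<cdot>\<^sub>v w"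
  using assms
  by (intro eq_vecI) (auto simp: row_scalar_prod_sum[of _ n n] cscalar_prod_sum[of _ n] algebra_simps
      sum.distrib sum_distrib_left sum_distrib_right)

lemma hermitian_mat_iff:
  "hermitian_mat n A \<longleftrightarrow> A \<in> carrier_mat n n \<and> (\<forall>i<n. \<forall>j<n. A $$ (i,j) = cnj (A $$ (j,i)))"
proof
  assume "hermitian_mat n A"
  then have A: "A \<in> carrier_mat n n" and adj: "mat_adjoint A = A" unfolding hermitian_mat_def by auto
  show "A \<in> carrier_mat n n \<and> (\<forall>i<n. \<forall>j<n. A $$ (i,j) = cnj (A $$ (j,i)))"
  proof (intro conjI allI impI A)
    fix i j assume "i < n" "j < n"
    have "A $$ (i,j) = mat_adjoint A $$ (i,j)" by (simp only: adj)
    also have "\<dots> = cnj (A $$ (j,i))" using A \<open>i < n\<close> \<open>j < n\<close> by simp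
    finally show "A $$ (i,j) = cnj (A $$ (j,i))" .
  qed
next
  assume H: "A \<in> carrier_mat n n \<and> (\<forall>i<n. \<forall>j<n. A $$ (i,j) = cnj (A $$ (j,i)))"
  then have A: "A \<in> carrier_mat n n" by (rule conjunct1)
  have sym: "A $$ (i,j) = cnj (A $$ (j,i))" if "i < n" "j < n" for i j
    by (rule H[THEN conjunct2, rule_format, OF that])
  have "mat_adjoint A = A"
  proof (rule eq_matI)
    fix i j assume "i < dim_row A" "j < dim_col A"
    then show "mat_adjoint A $$ (i,j) = A $$ (i,j)" using A sym[of i j] by simp
  qed (use A in auto)
  then show "hermitian_mat n A" using A unfolding hermitian_mat_def by blast
qed

lemma hermitian_mat_cnj: "hermitian_mat n A \<Longrightarrow> i < n \<Longrightarrow> j < n \<Longrightarrow> cnj (A $$ (i,j)) = A $$ (j,i)"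
  unfolding hermitian_mat_iff by (metis complex_cnj_cnj)

lemma hermitian_mat_carrier: "hermitian_mat n A \<Longrightarrow> A \<in> carrier_mat n n"
  unfolding hermitian_mat_def by blast

lemma hermitian_mat_add:
  assumes "hermitian_mat n A" "hermitian_mat n B"
  shows "hermitian_mat n (A + B)"
  unfolding hermitian_mat_iff
  using hermitian_mat_carrier[OF assms(1)] hermitian_mat_carrier[OF assms(2)]
  by (auto simp: hermitian_mat_cnj[OF assms(1)] hermitian_mat_cnj[OF assms(2)])

lemma hermitian_mat_diff:
  assumes "hermitian_mat n A" "hermitian_mat n B"
  shows "hermitian_mat n (A - B)"
  unfolding hermitian_mat_iff
  using hermitian_mat_carrier[OF assms(1)] hermitian_mat_carrier[OF assms(2)]
  by (auto simp: minus_carrier_mat hermitian_mat_cnj[OF assms(1)] hermitian_mat_cnj[OF assms(2)])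

lemma hermitian_mat_smult:
  assumes "hermitian_mat n A" "cnj c = c"
  shows "hermitian_mat n (c \<cdot>\<^sub>m A)"
  unfolding hermitian_mat_iff
  using hermitian_mat_carrier[OF assms(1)] assms(2) by (auto simp: hermitian_mat_cnj[OF assms(1)])

lemma hermitian_mat_outer_mat: "hermitian_mat n (outer_mat n w)"
  by (simp add: hermitian_mat_iff mult.commute)

lemma cscalar_prod_hermitian_mat:
  assumes h: "hermitian_mat n A" and v: "v \<in> carrier_vec n" and w: "w \<in> carrier_vec n"
  shows "(A *\<^sub>v v) \<bullet>c w = v \<bullet>c (A *\<^sub>v w)"
proof -
  have Ac: "A \<in> carrier_mat n n" using h by (rule hermitian_mat_carrier)
  have "(A *\<^sub>v v) \<bullet>c w = (\<Sum>i<n. (\<Sum>l<n. A$$(i,l) * v$l) * cnj (w$i))"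
    using Ac v w by (simp add: cscalar_prod_sum[of _ n] row_scalar_prod_sum[OF Ac v])
  also have "\<dots> = (\<Sum>i<n. \<Sum>l<n. v$l * (A$$(i,l) * cnj (w$i)))"
    by (simp add: sum_distrib_left sum_distrib_right mult_ac)
  also have "\<dots> = (\<Sum>l<n. \<Sum>i<n. v$l * (A$$(i,l) * cnj (w$i)))"
    by (rule sum.swap)
  also have "\<dots> = (\<Sum>l<n. v$l * cnj (\<Sum>i<n. A$$(l,i) * w$i))"
    by (intro sum.cong refl) (simp add: sum_distrib_left cnj_sum hermitian_mat_cnj[OF h])
  also have "\<dots> = v \<bullet>c (A *\<^sub>v w)"
    using Ac v w by (simp add: cscalar_prod_sum[of _ n] row_scalar_prod_sum[OF Ac w])
  finally show ?thesis .
qed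

section \<open>Sesquilinear forms and positive semidefinite matrices\<close>

definition sesq_form :: "nat \<Rightarrow> complex mat \<Rightarrow> (nat \<Rightarrow> complex) \<Rightarrow> (nat \<Rightarrow> complex) \<Rightarrow> complex"
  where "sesq_form n A a b = (\<Sum>i<n. \<Sum>j<n. cnj (a i) * A $$ (i,j) * b j)"

definition unit_fun :: "nat \<Rightarrow> nat \<Rightarrow> complex"
  where "unit_fun i k = (if k = i then 1 else 0)"

lemma psd_mat_iff_sesq_form: "psd_mat n A \<longleftrightarrow> hermitian_mat n A \<and> (\<forall>v. 0 \<le> sesq_form n A v v)"
  unfolding psd_mat_def sesq_form_def less_eq_complex_def by auto

lemma psd_mat_hermitian: "psd_mat n A \<Longrightarrow> hermitian_mat n A"
  unfolding psd_mat_def by blast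

lemma psd_mat_carrier: "psd_mat n A \<Longrightarrow> A \<in> carrier_mat n n"
  by (simp add: psd_mat_hermitian hermitian_mat_carrier)

lemma psd_mat_sesq_form_nonneg: "psd_mat n A \<Longrightarrow> 0 \<le> sesq_form n A v v"
  unfolding psd_mat_iff_sesq_form by blast

lemma sesq_form_lincomb:
  assumes "\<And>i j. i < n \<Longrightarrow> j < n \<Longrightarrow> A $$ (i,j) = c * B $$ (i,j) + e * C $$ (i,j)"
  shows "sesq_form n A a b = c * sesq_form n B a b + e * sesq_form n C a b"
proof -
  have "sesq_form n A a b =
      (\<Sum>i<n. \<Sum>j<n. c * (cnj (a i) * B $$ (i,j) * b j) + e * (cnj (a i) * C $$ (i,j) * b j))"
    unfolding sesq_form_def by (intro sum.cong refl) (simp add: assms algebra_simps)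
  also have "\<dots> = c * sesq_form n B a b + e * sesq_form n C a b"
    unfolding sesq_form_def by (simp add: sum.distrib sum_distrib_left)
  finally show ?thesis .
qed

lemma sesq_form_swap:
  assumes "hermitian_mat n A"
  shows "sesq_form n A b a = cnj (sesq_form n A a b)"
proof -
  have "cnj (sesq_form n A a b) = (\<Sum>i<n. \<Sum>j<n. a i * cnj (A $$ (i,j)) * cnj (b j))"
    unfolding sesq_form_def cnj_sum by simp
  also have "\<dots> = (\<Sum>i<n. \<Sum>j<n. cnj (b j) * A $$ (j,i) * a i)"
    by (intro sum.cong refl) (simp add: hermitian_mat_cnj[OF assms] mult.commute mult.left_commute)
  also have "\<dots> = sesq_form n A b a"
    unfolding sesq_form_def by (rule sum.swap)
  finally show ?thesis by simp
qed

lemma sesq_form_add_smult: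
  "sesq_form n A (\<lambda>i. a i + t * b i) (\<lambda>i. a i + t * b i) =
   sesq_form n A a a + t * sesq_form n A a b + cnj t * sesq_form n A b a + cnj t * t * sesq_form n A b b"
proof -
  have "cnj (a i + t * b i) * A $$ (i,j) * (a j + t * b j) =
     cnj (a i) * A $$ (i,j) * a j + t * (cnj (a i) * A $$ (i,j) * b j)
     + cnj t * (cnj (b i) * A $$ (i,j) * a j) + cnj t * t * (cnj (b i) * A $$ (i,j) * b j)" for i j
    by (simp add: algebra_simps)
  then show ?thesis unfolding sesq_form_def by (simp add: sum.distrib sum_distrib_left)
qed

lemma sesq_form_unit_fun_left:
  assumes "j < n"
  shows "sesq_form n A (unit_fun j) a = (\<Sum>k<n. A $$ (j,k) * a k)"
proof -
  have "sesq_form n A (unit_fun j) a = (\<Sum>i<n. if i = j then (\<Sum>k<n. A $$ (j,k) * a k) else 0)"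
    unfolding sesq_form_def by (intro sum.cong refl) (auto simp: unit_fun_def)
  then show ?thesis using assms by simp
qed

lemma sesq_form_unit_fun:
  assumes "i < n" "j < n"
  shows "sesq_form n A (unit_fun i) (unit_fun j) = A $$ (i,j)"
proof -
  have "(\<Sum>k<n. A $$ (i,k) * unit_fun j k) = (\<Sum>k<n. if k = j then A $$ (i,k) else 0)"
    by (intro sum.cong) (auto simp: unit_fun_def)
  then show ?thesis using assms by (simp add: sesq_form_unit_fun_left)
qed

lemma sesq_form_eq_cscalar_prod:
  assumes "A \<in> carrier_mat n n"
  shows "sesq_form n A a a = (A *\<^sub>v vec n a) \<bullet>c vec n a"
proof -
  have "(A *\<^sub>v vec n a) \<bullet>c vec n a = (\<Sum>i<n. (\<Sum>j<n. A $$ (i,j) * a j) * cnj (a i))"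
    using assms by (simp add: cscalar_prod_sum[of _ n] row_scalar_prod_sum[OF assms])
  also have "\<dots> = sesq_form n A a a"
    unfolding sesq_form_def by (simp add: sum_distrib_left sum_distrib_right mult_ac)
  finally show ?thesis by simp
qed

lemma psd_mat_cscalar_prod_nonneg:
  assumes "psd_mat n A" "v \<in> carrier_vec n"
  shows "0 \<le> (A *\<^sub>v v) \<bullet>c v"
proof -
  have "vec n (\<lambda>i. v $ i) = v" using assms(2) by auto
  then show ?thesis
    using psd_mat_sesq_form_nonneg[OF assms(1), of "\<lambda>i. v $ i"]
      sesq_form_eq_cscalar_prod[OF psd_mat_carrier[OF assms(1)]] by simp
qed

lemma sesq_form_eq_0_if_psd:
  assumes psd: "psd_mat n A" and b: "sesq_form n A b b = 0"
  shows "sesq_form n A a b = 0"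
proof (rule ccontr)
  define s where "s = sesq_form n A a b"
  assume "sesq_form n A a b \<noteq> 0"
  then have "(cmod s)\<^sup>2 > 0" by (simp add: s_def)
  have ba: "sesq_form n A b a = cnj s"
    unfolding s_def by (rule sesq_form_swap[OF psd_mat_hermitian[OF psd]])
  have sq: "cnj s * s = of_real ((cmod s)\<^sup>2)" by (metis complex_norm_square mult.commute)
  \<comment> \<open>chosen so that the form takes the value \<open>-1\<close> at \<open>a + t b\<close>\<close>
  define r where "r = (Re (sesq_form n A a a) + 1) / (2 * (cmod s)\<^sup>2)"
  define t where "t = - of_real r * cnj s"
  have "0 \<le> sesq_form n A (\<lambda>i. a i + t * b i) (\<lambda>i. a i + t * b i)"
    by (rule psd_mat_sesq_form_nonneg[OF psd])
  also have "\<dots> = sesq_form n A a a + t * s + cnj t * cnj s"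
    unfolding sesq_form_add_smult ba b s_def[symmetric] by simp
  also have "\<dots> = sesq_form n A a a - of_real (2 * r * (cmod s)\<^sup>2)"
    unfolding t_def using sq by (simp add: algebra_simps)
  also have "\<dots> = sesq_form n A a a - of_real (Re (sesq_form n A a a) + 1)"
    using \<open>(cmod s)\<^sup>2 > 0\<close> by (simp add: r_def field_simps)
  finally show False by (simp add: less_eq_complex_def)
qed

lemma sesq_form_cauchy_schwarz:
  assumes psd: "psd_mat n A"
  shows "(cmod (sesq_form n A b a))\<^sup>2 \<le> Re (sesq_form n A b b) * Re (sesq_form n A a a)"
proof (cases "sesq_form n A b b = 0")
  case True
  then have "sesq_form n A a b = 0" by (rule sesq_form_eq_0_if_psd[OF psd])
  then show ?thesis using True sesq_form_swap[OF psd_mat_hermitian[OF psd], of b a] by simp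
next
  case False
  define s where "s = sesq_form n A b a"
  define r where "r = Re (sesq_form n A b b)"
  define \<sigma> where "\<sigma> = (cmod s)\<^sup>2"
  have bb: "sesq_form n A b b = of_real r"
    using psd_mat_sesq_form_nonneg[OF psd, of b] by (simp add: r_def less_eq_complex_def complex_eq_iff)
  have "r > 0"
    using psd_mat_sesq_form_nonneg[OF psd, of b] False bb by (auto simp: less_eq_complex_def)
  have ab: "sesq_form n A a b = cnj s"
    unfolding s_def by (rule sesq_form_swap[OF psd_mat_hermitian[OF psd]])
  have sq: "s * cnj s = of_real \<sigma>" "cnj s * s = of_real \<sigma>"
    unfolding \<sigma>_def by (metis complex_norm_square, metis complex_norm_square mult.commute)
  define t where "t = - s / of_real r"
  have ct: "cnj t = - cnj s / of_real r" by (simp add: t_def)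
  have "t * cnj s = - (s * cnj s) / of_real r" by (simp add: t_def)
  moreover have "cnj t * s = - (cnj s * s) / of_real r" by (simp add: ct)
  moreover have "cnj t * t * of_real r = (cnj s * s) / of_real r"
    using \<open>r > 0\<close> by (simp add: ct t_def field_simps power2_eq_square)
  ultimately have "t * cnj s = - of_real (\<sigma> / r)" "cnj t * s = - of_real (\<sigma> / r)"
    "cnj t * t * of_real r = of_real (\<sigma> / r)"
    using sq by simp_all
  then have "sesq_form n A (\<lambda>i. a i + t * b i) (\<lambda>i. a i + t * b i) = sesq_form n A a a - of_real (\<sigma> / r)"
    unfolding sesq_form_add_smult ab bb s_def[symmetric] by simp
  then have "\<sigma> / r \<le> Re (sesq_form n A a a)"
    using psd_mat_sesq_form_nonneg[OF psd, of "\<lambda>i. a i + t * b i"] by (simp add: less_eq_complex_def)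
  then have "\<sigma> \<le> r * Re (sesq_form n A a a)" using \<open>r > 0\<close> by (simp add: pos_divide_le_eq mult.commute)
  then show ?thesis by (simp add: \<sigma>_def s_def r_def)
qed

lemma psd_mat_diag_nonneg: "psd_mat n A \<Longrightarrow> i < n \<Longrightarrow> 0 \<le> A $$ (i,i)"
  by (metis psd_mat_sesq_form_nonneg sesq_form_unit_fun)

lemma psd_mat_eq_0_if_diag_eq_0:
  assumes psd: "psd_mat n A" and diag: "\<And>i. i < n \<Longrightarrow> A $$ (i,i) = 0"
  shows "A = 0\<^sub>m n n"
proof (rule eq_matI)
  fix i j assume "i < dim_row (0\<^sub>m n n)" "j < dim_col (0\<^sub>m n n)"
  then have ij: "i < n" "j < n" by auto
  have "sesq_form n A (unit_fun j) (unit_fun j) = 0" using ij diag by (simp add: sesq_form_unit_fun)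
  then have "sesq_form n A (unit_fun i) (unit_fun j) = 0" by (rule sesq_form_eq_0_if_psd[OF psd])
  then show "A $$ (i,j) = 0\<^sub>m n n $$ (i,j)" using ij by (simp add: sesq_form_unit_fun)
qed (use psd_mat_carrier[OF psd] in auto)

lemma psd_mat_eq_0_if_uminus_psd:
  assumes "psd_mat n A" "psd_mat n (- A)"
  shows "A = 0\<^sub>m n n"
proof (rule psd_mat_eq_0_if_diag_eq_0[OF assms(1)])
  fix i assume "i < n"
  then have "0 \<le> A $$ (i,i)" "0 \<le> - A $$ (i,i)"
    using psd_mat_diag_nonneg[OF assms(1)] psd_mat_diag_nonneg[OF assms(2)] psd_mat_carrier[OF assms(1)]
    by auto
  then show "A $$ (i,i) = 0" by (simp add: less_eq_complex_def complex_eq_iff)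
qed

lemma sesq_form_outer_mat:
  "sesq_form n (outer_mat n w) a a = cnj (\<Sum>k<n. cnj (w $ k) * a k) * (\<Sum>k<n. cnj (w $ k) * a k)"
proof -
  have "sesq_form n (outer_mat n w) a a = (\<Sum>i<n. \<Sum>k<n. (cnj (a i) * w $ i) * (cnj (w $ k) * a k))"
    unfolding sesq_form_def by (intro sum.cong refl) (simp add: mult_ac)
  also have "\<dots> = (\<Sum>i<n. cnj (a i) * w $ i) * (\<Sum>k<n. cnj (w $ k) * a k)"
    by (rule sum_product[symmetric])
  finally show ?thesis by (simp add: cnj_sum mult.commute)
qed

lemma psd_mat_outer_mat: "psd_mat n (outer_mat n w)"
  unfolding psd_mat_iff_sesq_form
proof (intro conjI allI)
  show "hermitian_mat n (outer_mat n w)" by (rule hermitian_mat_outer_mat)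
  fix a
  define s where "s = (\<Sum>k<n. cnj (w $ k) * a k)"
  have "cnj s * s = of_real ((cmod s)\<^sup>2)" by (metis complex_norm_square mult.commute)
  then show "0 \<le> sesq_form n (outer_mat n w) a a"
    by (simp add: sesq_form_outer_mat s_def[symmetric] less_eq_complex_def)
qed

(* Cauchy-Schwarz for the form of x against the j-th unit vector. *)
lemma psd_mat_diag_smult_minus_outer_mat:
  assumes psd: "psd_mat n x" and j: "j < n"
  shows "psd_mat n (x $$ (j,j) \<cdot>\<^sub>m x - outer_mat n (col x j))"
  unfolding psd_mat_iff_sesq_form
proof (intro conjI allI)
  have xc: "x \<in> carrier_mat n n" and herm: "hermitian_mat n x"
    using psd by (auto simp: psd_mat_carrier psd_mat_hermitian)
  show "hermitian_mat n (x $$ (j,j) \<cdot>\<^sub>m x - outer_mat n (col x j))"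
    using hermitian_mat_cnj[OF herm j j]
    by (intro hermitian_mat_diff hermitian_mat_smult herm hermitian_mat_outer_mat)
  fix a
  define s where "s = sesq_form n x (unit_fun j) a"
  define r where "r = Re (x $$ (j,j))"
  define q where "q = Re (sesq_form n x a a)"
  have xjj: "x $$ (j,j) = of_real r"
    using psd_mat_diag_nonneg[OF psd j] by (simp add: r_def less_eq_complex_def complex_eq_iff)
  have xaa: "sesq_form n x a a = of_real q"
    using psd_mat_sesq_form_nonneg[OF psd, of a] by (simp add: q_def less_eq_complex_def complex_eq_iff)
  have "col x j $ k = x $$ (k,j)" if "k < n" for k using xc j that by simp
  then have s: "s = (\<Sum>k<n. cnj (col x j $ k) * a k)"
    unfolding s_def sesq_form_unit_fun_left[OF j]
    by (intro sum.cong refl) (simp add: j hermitian_mat_cnj[OF herm])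
  have cs: "(cmod s)\<^sup>2 \<le> r * q"
    using sesq_form_cauchy_schwarz[OF psd, of "unit_fun j" a] by (simp add: s_def r_def q_def sesq_form_unit_fun j)
  have "sesq_form n (x $$ (j,j) \<cdot>\<^sub>m x - outer_mat n (col x j)) a a =
      x $$ (j,j) * sesq_form n x a a + (-1) * (cnj s * s)"
    unfolding s sesq_form_outer_mat[symmetric] by (rule sesq_form_lincomb) (use xc in simp)
  also have "\<dots> = of_real (r * q - (cmod s)\<^sup>2)"
    unfolding xjj xaa using complex_norm_square[of s] by (simp add: mult.commute)
  finally show "0 \<le> sesq_form n (x $$ (j,j) \<cdot>\<^sub>m x - outer_mat n (col x j)) a a"
    using cs by (simp add: less_eq_complex_def)
qed

section \<open>Linear and positive maps\<close>

lemma linear_map_mat_carrier: "linear_map_mat n T \<Longrightarrow> A \<in> carrier_mat n n \<Longrightarrow> T A \<in> carrier_mat n n"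
  unfolding linear_map_mat_def by blast

lemma linear_map_mat_add:
  "linear_map_mat n T \<Longrightarrow> A \<in> carrier_mat n n \<Longrightarrow> B \<in> carrier_mat n n \<Longrightarrow> T (A + B) = T A + T B"
  unfolding linear_map_mat_def by blast

lemma linear_map_mat_smult: "linear_map_mat n T \<Longrightarrow> A \<in> carrier_mat n n \<Longrightarrow> T (c \<cdot>\<^sub>m A) = c \<cdot>\<^sub>m T A"
  unfolding linear_map_mat_def by blast

lemma linear_map_mat_diff:
  assumes T: "linear_map_mat n T" and A: "A \<in> carrier_mat n n" and B: "B \<in> carrier_mat n n"
  shows "T (A - B) = T A - T B"
proof -
  have minus: "M - N = M + (-1::complex) \<cdot>\<^sub>m N" if "M \<in> carrier_mat n n" "N \<in> carrier_mat n n" for M N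
    using that by (intro eq_matI) auto
  have "T (A - B) = T A + (-1) \<cdot>\<^sub>m T B"
    using A B by (simp add: minus linear_map_mat_add[OF T] linear_map_mat_smult[OF T])
  then show ?thesis using A B by (simp add: minus linear_map_mat_carrier[OF T])
qed

lemma linear_map_mat_zero:
  assumes "linear_map_mat n T"
  shows "T (0\<^sub>m n n) = 0\<^sub>m n n"
proof -
  have "T (0\<^sub>m n n) = T (0 \<cdot>\<^sub>m 0\<^sub>m n n)" by simp
  also have "\<dots> = 0 \<cdot>\<^sub>m T (0\<^sub>m n n)" by (rule linear_map_mat_smult[OF assms zero_carrier_mat])
  also have "\<dots> = 0\<^sub>m n n" using linear_map_mat_carrier[OF assms, of "0\<^sub>m n n"] by (intro eq_matI) auto
  finally show ?thesis .
qed

lemma funpow_linear_map_mat_zero: "linear_map_mat n T \<Longrightarrow> (T ^^ k) (0\<^sub>m n n) = 0\<^sub>m n n"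
  by (induction k) (auto simp: linear_map_mat_zero)

lemma funpow_linear_map_mat_carrier:
  "linear_map_mat n T \<Longrightarrow> A \<in> carrier_mat n n \<Longrightarrow> (T ^^ k) A \<in> carrier_mat n n"
  by (induction k) (auto simp: linear_map_mat_carrier)

definition positive_map :: "nat \<Rightarrow> (complex mat \<Rightarrow> complex mat) \<Rightarrow> bool"
  where "positive_map n T \<longleftrightarrow> linear_map_mat n T \<and> (\<forall>X. psd_mat n X \<longrightarrow> psd_mat n (T X))"

lemma completely_positive_imp_positive_map:
  assumes cp: "completely_positive n T"
  shows "positive_map n T"
  unfolding positive_map_def
proof (intro conjI allI impI)
  show T: "linear_map_mat n T" using cp unfolding completely_positive_def by blast
  fix X assume X: "psd_mat n X"
  then have Xc: "X \<in> carrier_mat n n" by (rule psd_mat_carrier)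
  have "mat_block n 0 0 X = X" using Xc by (intro eq_matI) (auto simp: mat_block_def)
  then have "ampliation 1 n T X = T X"
    using linear_map_mat_carrier[OF T Xc] by (intro eq_matI) (auto simp: ampliation_def)
  moreover have "psd_mat (1 * n) (ampliation 1 n T X)" using cp X unfolding completely_positive_def by auto
  ultimately show "psd_mat n (T X)" by simp
qed

lemma funpow_positive_map_psd: "positive_map n T \<Longrightarrow> psd_mat n X \<Longrightarrow> psd_mat n ((T ^^ k) X)"
  by (induction k) (auto simp: positive_map_def)

lemma positive_map_eq_0_if_dominated:
  assumes pos: "positive_map n T" and A: "psd_mat n A" and B: "B \<in> carrier_mat n n"
    and dom: "psd_mat n (c \<cdot>\<^sub>m B - A)" and TB: "T B = 0\<^sub>m n n"
  shows "T A = 0\<^sub>m n n"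
proof -
  have T: "linear_map_mat n T" using pos by (simp add: positive_map_def)
  have TA: "psd_mat n (T A)" using pos A by (simp add: positive_map_def)
  have Ac: "A \<in> carrier_mat n n" using A by (rule psd_mat_carrier)
  have "T (c \<cdot>\<^sub>m B - A) = c \<cdot>\<^sub>m 0\<^sub>m n n - T A"
    using B Ac by (simp add: linear_map_mat_diff[OF T] linear_map_mat_smult[OF T] TB)
  also have "\<dots> = - T A" using psd_mat_carrier[OF TA] by (intro eq_matI) auto
  finally have "psd_mat n (- T A)" using pos dom by (metis positive_map_def)
  with TA show ?thesis by (rule psd_mat_eq_0_if_uminus_psd)
qed

section \<open>Orthogonal projections and ranges\<close>

lemma proj_mat_carrier: "proj_mat n P \<Longrightarrow> P \<in> carrier_mat n n"
  unfolding proj_mat_def by blast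

lemma proj_mat_hermitian: "proj_mat n P \<Longrightarrow> hermitian_mat n P"
  unfolding proj_mat_def hermitian_mat_def by blast

lemma proj_mat_mult_vec_idem:
  assumes P: "proj_mat n P" and v: "v \<in> carrier_vec n"
  shows "P *\<^sub>v (P *\<^sub>v v) = P *\<^sub>v v"
proof -
  have "P *\<^sub>v (P *\<^sub>v v) = (P * P) *\<^sub>v v" using proj_mat_carrier[OF P] v by simp
  then show ?thesis using P by (simp add: proj_mat_def)
qed

lemma proj_mat_mult_vec_residual:
  assumes P: "proj_mat n P" and v: "v \<in> carrier_vec n"
  shows "P *\<^sub>v (v - P *\<^sub>v v) = 0\<^sub>v n"
  using proj_mat_carrier[OF P] v by (simp add: mult_minus_distrib_mat_vec proj_mat_mult_vec_idem[OF P v])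

lemma proj_mat_cscalar_prod:
  assumes P: "proj_mat n P" and v: "v \<in> carrier_vec n"
  shows "(P *\<^sub>v v) \<bullet>c v = (P *\<^sub>v v) \<bullet>c (P *\<^sub>v v)"
proof -
  have "(P *\<^sub>v v) \<bullet>c v = (P *\<^sub>v (P *\<^sub>v v)) \<bullet>c v" using proj_mat_mult_vec_idem[OF P v] by simp
  also have "\<dots> = (P *\<^sub>v v) \<bullet>c (P *\<^sub>v v)"
    using proj_mat_carrier[OF P] v by (intro cscalar_prod_hermitian_mat[OF proj_mat_hermitian[OF P]]) auto
  finally show ?thesis .
qed

lemma proj_mat_psd:
  assumes P: "proj_mat n P"
  shows "psd_mat n P"
  unfolding psd_mat_iff_sesq_form
proof (intro conjI allI)
  show "hermitian_mat n P" using P by (rule proj_mat_hermitian)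
  fix a
  have "sesq_form n P a a = (P *\<^sub>v vec n a) \<bullet>c (P *\<^sub>v vec n a)"
    using proj_mat_cscalar_prod[OF P] sesq_form_eq_cscalar_prod[OF proj_mat_carrier[OF P]] by simp
  then show "0 \<le> sesq_form n P a a" by (simp add: conjugate_square_ge_0_vec)
qed

lemma proj_mat_zero: "proj_mat n (0\<^sub>m n n)"
  unfolding proj_mat_def by (auto intro!: eq_matI)

lemma proj_mat_add_smult_outer_mat:
  assumes P: "proj_mat n P" and w: "w \<in> carrier_vec n" "w \<noteq> 0\<^sub>v n" and Pw: "P *\<^sub>v w = 0\<^sub>v n"
  shows "proj_mat n (P + (1 / (w \<bullet>c w)) \<cdot>\<^sub>m outer_mat n w)"
proof -
  define N where "N = w \<bullet>c w"
  define c where "c = 1 / N"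
  define P' where "P' = P + c \<cdot>\<^sub>m outer_mat n w"
  have cN: "c * N = 1" using w by (simp add: c_def N_def)
  have "cnj N = N"
    using conjugate_square_ge_0_vec[of w] by (simp add: N_def less_eq_complex_def complex_eq_iff)
  then have cc: "cnj c = c" by (simp add: c_def)
  have Pc: "P \<in> carrier_mat n n" and hP: "hermitian_mat n P"
    using P by (auto simp: proj_mat_carrier proj_mat_hermitian)
  have P'c: "P' \<in> carrier_mat n n" unfolding P'_def using Pc by simp
  have app: "P' *\<^sub>v z = P *\<^sub>v z + (c * (z \<bullet>c w)) \<cdot>\<^sub>v w" if "z \<in> carrier_vec n" for z
    unfolding P'_def by (rule add_smult_outer_mat_mult_vec[OF Pc w(1) that])
  have "hermitian_mat n P'"
    unfolding P'_def by (rule hermitian_mat_add[OF hP hermitian_mat_smult[OF hermitian_mat_outer_mat cc]])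
  moreover have "P' * P' = P'"
  proof (rule eq_mat_if_mult_vec_eq)
    fix z :: "complex vec" assume z: "z \<in> carrier_vec n"
    define \<alpha> where "\<alpha> = c * (z \<bullet>c w)"
    have Pzc: "P *\<^sub>v z \<in> carrier_vec n" using Pc z by simp
    have "(P *\<^sub>v z) \<bullet>c w = 0"
      using cscalar_prod_hermitian_mat[OF hP z w(1)] Pw z by simp
    then have Pz_w: "(P *\<^sub>v z + \<alpha> \<cdot>\<^sub>v w) \<bullet>c w = \<alpha> * N"
      unfolding cscalar_prod_add_smult[OF Pzc w(1) w(1)] N_def by simp
    have "\<alpha> \<cdot>\<^sub>v 0\<^sub>v n = (0\<^sub>v n :: complex vec)" by (intro eq_vecI) auto
    then have P_Pz: "P *\<^sub>v (P *\<^sub>v z + \<alpha> \<cdot>\<^sub>v w) = P *\<^sub>v z"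
      using Pzc by (simp add: mult_mat_vec_add_smult[OF Pc Pzc w(1)] proj_mat_mult_vec_idem[OF P z] Pw)
    have "P *\<^sub>v z + \<alpha> \<cdot>\<^sub>v w \<in> carrier_vec n" using Pzc w by simp
    have "(P' * P') *\<^sub>v z = P' *\<^sub>v (P' *\<^sub>v z)" using P'c z by simp
    also have "\<dots> = P' *\<^sub>v (P *\<^sub>v z + \<alpha> \<cdot>\<^sub>v w)" unfolding app[OF z] \<alpha>_def ..
    also have "\<dots> = P *\<^sub>v z + (c * (\<alpha> * N)) \<cdot>\<^sub>v w"
      unfolding app[OF \<open>P *\<^sub>v z + \<alpha> \<cdot>\<^sub>v w \<in> carrier_vec n\<close>] P_Pz Pz_w ..
    also have "c * (\<alpha> * N) = \<alpha>" using cN by (simp add: mult_ac)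
    also have "P *\<^sub>v z + \<alpha> \<cdot>\<^sub>v w = P' *\<^sub>v z" unfolding app[OF z] \<alpha>_def ..
    finally show "(P' * P') *\<^sub>v z = P' *\<^sub>v z" .
  qed (use P'c in auto)
  ultimately show ?thesis unfolding proj_mat_def hermitian_mat_def P'_def c_def N_def by blast
qed

lemma mult_mat_vec_in_mat_range:
  "A \<in> carrier_mat n n \<Longrightarrow> v \<in> carrier_vec n \<Longrightarrow> A *\<^sub>v v \<in> mat_range n A"
  unfolding mat_range_def by blast

lemma col_in_mat_range:
  assumes "x \<in> carrier_mat n n" "j < n"
  shows "col x j \<in> mat_range n x"
proof -
  have "col x j = x *\<^sub>v unit_vec n j" using assms by (intro eq_vecI) auto
  then show ?thesis using assms(1) by (simp add: mult_mat_vec_in_mat_range)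
qed

lemma mat_range_add_smult:
  fixes X :: "complex mat"
  assumes X: "X \<in> carrier_mat n n" and "a \<in> mat_range n X" "b \<in> mat_range n X"
  shows "a + c \<cdot>\<^sub>v b \<in> mat_range n X"
proof -
  obtain a' b' where "a' \<in> carrier_vec n" "a = X *\<^sub>v a'" "b' \<in> carrier_vec n" "b = X *\<^sub>v b'"
    using assms(2,3) unfolding mat_range_def by blast
  then have "a + c \<cdot>\<^sub>v b = X *\<^sub>v (a' + c \<cdot>\<^sub>v b')" "a' + c \<cdot>\<^sub>v b' \<in> carrier_vec n"
    by (simp_all add: mult_mat_vec_add_smult[OF X])
  then show ?thesis unfolding mat_range_def by blast
qed

lemma mat_range_diff:
  fixes X :: "complex mat"
  assumes X: "X \<in> carrier_mat n n" and a: "a \<in> mat_range n X" and b: "b \<in> mat_range n X"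
  shows "a - b \<in> mat_range n X"
proof -
  have "a \<in> carrier_vec n" "b \<in> carrier_vec n" using a b X unfolding mat_range_def by auto
  then have "a - b = a + (-1) \<cdot>\<^sub>v b" by (intro eq_vecI) auto
  then show ?thesis using mat_range_add_smult[OF X a b] by simp
qed

lemma mat_range_zero_mat: "mat_range n (0\<^sub>m n n) = {0\<^sub>v n}"
  unfolding mat_range_def by (auto intro!: exI[of _ "0\<^sub>v n"])

lemma mat_range_subset_iff:
  assumes Q: "proj_mat n Q" and P: "P \<in> carrier_mat n n"
  shows "mat_range n P \<subseteq> mat_range n Q \<longleftrightarrow> Q * P = P"
proof
  have Qc: "Q \<in> carrier_mat n n" using Q by (rule proj_mat_carrier)
  assume sub: "mat_range n P \<subseteq> mat_range n Q"
  show "Q * P = P"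
  proof (rule eq_mat_if_mult_vec_eq)
    fix v :: "complex vec" assume v: "v \<in> carrier_vec n"
    obtain w where w: "w \<in> carrier_vec n" "P *\<^sub>v v = Q *\<^sub>v w"
      using sub mult_mat_vec_in_mat_range[OF P v] unfolding mat_range_def by blast
    then show "(Q * P) *\<^sub>v v = P *\<^sub>v v"
      using Qc P v by (simp add: proj_mat_mult_vec_idem[OF Q])
  qed (use Qc P in auto)
next
  assume "Q * P = P"
  then have "P *\<^sub>v v = Q *\<^sub>v (P *\<^sub>v v)" if "v \<in> carrier_vec n" for v
    using proj_mat_carrier[OF Q] P that by (metis assoc_mult_mat_vec)
  then show "mat_range n P \<subseteq> mat_range n Q"
    unfolding mat_range_def using P by fastforce
qed

lemma proj_mat_absorb_iff:
  assumes P: "proj_mat n P" and Q: "proj_mat n Q"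
  shows "Q * P = P \<longleftrightarrow> P * Q = P"
proof -
  have adj: "mat_adjoint (A * B) = B * A" if "proj_mat n A" "proj_mat n B" for A B
    using mat_adjoint_mult[OF proj_mat_carrier[OF that(1)] proj_mat_carrier[OF that(2)]] that
    by (simp add: proj_mat_def)
  show ?thesis
  proof
    assume "Q * P = P"
    then have "mat_adjoint (Q * P) = mat_adjoint P" by (rule arg_cong)
    then show "P * Q = P" using adj[OF Q P] P by (simp add: proj_mat_def)
  next
    assume "P * Q = P"
    then have "mat_adjoint (P * Q) = mat_adjoint P" by (rule arg_cong)
    then show "Q * P = P" using adj[OF P Q] P by (simp add: proj_mat_def)
  qed
qed

lemma proj_mat_eq_if_mat_range_eq:
  assumes P: "proj_mat n P" and Q: "proj_mat n Q" and r: "mat_range n P = mat_range n Q"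
  shows "P = Q"
proof -
  have QP: "Q * P = P" and PQ: "P * Q = Q"
    using r mat_range_subset_iff[OF Q proj_mat_carrier[OF P]] mat_range_subset_iff[OF P proj_mat_carrier[OF Q]]
    by auto
  have "P * Q = P" using QP proj_mat_absorb_iff[OF P Q] by blast
  then show ?thesis using PQ by simp
qed

lemma proj_mat_diff:
  assumes P: "proj_mat n P" and Q: "proj_mat n Q" and QP: "Q * P = P"
  shows "proj_mat n (Q - P)"
proof -
  have Pc: "P \<in> carrier_mat n n" and Qc: "Q \<in> carrier_mat n n"
    using P Q by (auto simp: proj_mat_carrier)
  have PQ: "P * Q = P" using QP proj_mat_absorb_iff[OF P Q] by blast
  have "hermitian_mat n (Q - P)"
    by (rule hermitian_mat_diff[OF proj_mat_hermitian[OF Q] proj_mat_hermitian[OF P]])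
  moreover have "(Q - P) * (Q - P) = Q - P"
  proof (rule eq_matI)
    fix i j assume "i < dim_row (Q - P)" "j < dim_col (Q - P)"
    then have ij: "i < n" "j < n" using Pc by auto
    have "((Q - P) * (Q - P)) $$ (i,j) = (\<Sum>l<n. (Q $$ (i,l) - P $$ (i,l)) * (Q $$ (l,j) - P $$ (l,j)))"
      using Pc Qc ij by (simp add: row_col_scalar_prod_sum[of _ n n _ n] minus_carrier_mat)
    also have "\<dots> = (\<Sum>l<n. Q $$ (i,l) * Q $$ (l,j)) - (\<Sum>l<n. Q $$ (i,l) * P $$ (l,j))
                   - (\<Sum>l<n. P $$ (i,l) * Q $$ (l,j)) + (\<Sum>l<n. P $$ (i,l) * P $$ (l,j))"
      by (simp add: algebra_simps sum_subtractf sum.distrib)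
    also have "\<dots> = (Q * Q) $$ (i,j) - (Q * P) $$ (i,j) - (P * Q) $$ (i,j) + (P * P) $$ (i,j)"
      using Pc Qc ij by (simp add: row_col_scalar_prod_sum[of _ n n _ n])
    also have "\<dots> = (Q - P) $$ (i,j)" using P Q QP PQ Pc Qc ij by (simp add: proj_mat_def)
    finally show "((Q - P) * (Q - P)) $$ (i,j) = (Q - P) $$ (i,j)" .
  qed (use Pc in auto)
  ultimately show ?thesis unfolding proj_mat_def hermitian_mat_def by blast
qed

lemma loewner_le_proj_iff:
  assumes P: "proj_mat n P" and Q: "proj_mat n Q"
  shows "loewner_le n P Q \<longleftrightarrow> Q * P = P"
proof
  assume "Q * P = P"
  then show "loewner_le n P Q"
    unfolding loewner_le_def using P Q by (auto simp: proj_mat_carrier proj_mat_psd proj_mat_diff)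
next
  assume le: "loewner_le n P Q"
  have Pc: "P \<in> carrier_mat n n" and Qc: "Q \<in> carrier_mat n n"
    using P Q by (auto simp: proj_mat_carrier)
  have "P *\<^sub>v (v - Q *\<^sub>v v) = 0\<^sub>v n" if v: "v \<in> carrier_vec n" for v
  proof -
    define z where "z = v - Q *\<^sub>v v"
    have z: "z \<in> carrier_vec n" using v Qc by (simp add: z_def)
    have "Q *\<^sub>v z = 0\<^sub>v n" unfolding z_def by (rule proj_mat_mult_vec_residual[OF Q v])
    then have "((Q - P) *\<^sub>v z) \<bullet>c z = - ((P *\<^sub>v z) \<bullet>c (P *\<^sub>v z))"
      using Pc Qc z by (simp add: minus_mult_distrib_mat_vec proj_mat_cscalar_prod[OF P z])
    moreover have "0 \<le> ((Q - P) *\<^sub>v z) \<bullet>c z"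
      using le psd_mat_cscalar_prod_nonneg[of n "Q - P" z] z by (simp add: loewner_le_def)
    ultimately have "(P *\<^sub>v z) \<bullet>c (P *\<^sub>v z) = 0"
      using conjugate_square_ge_0_vec[of "P *\<^sub>v z"] by (simp add: antisym)
    then show ?thesis using conjugate_square_eq_0_vec[of "P *\<^sub>v z" n] Pc z by (simp add: z_def)
  qed
  then have "P *\<^sub>v (Q *\<^sub>v v) = P *\<^sub>v v" if "v \<in> carrier_vec n" for v
    using eq_vec_if_diff_eq_0[of "P *\<^sub>v v" n "P *\<^sub>v (Q *\<^sub>v v)"] Pc Qc that
    by (simp add: mult_minus_distrib_mat_vec)
  then have "P * Q = P" using Pc Qc by (intro eq_mat_if_mult_vec_eq) auto
  then show "Q * P = P" using proj_mat_absorb_iff[OF P Q] by blast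
qed

lemma loewner_le_proj_iff_mat_range:
  assumes "proj_mat n P" "proj_mat n Q"
  shows "loewner_le n P Q \<longleftrightarrow> mat_range n P \<subseteq> mat_range n Q"
  using assms by (simp add: loewner_le_proj_iff mat_range_subset_iff proj_mat_carrier)

lemma proj_mat_le_zero:
  assumes "proj_mat n P" "loewner_le n P (0\<^sub>m n n)"
  shows "P = 0\<^sub>m n n"
proof -
  have "0\<^sub>m n n * P = P" using loewner_le_proj_iff[OF assms(1) proj_mat_zero] assms(2) by simp
  moreover have "0\<^sub>m n n * P = 0\<^sub>m n n" using proj_mat_carrier[OF assms(1)] by simp
  ultimately show ?thesis by simp
qed

section \<open>Supports and joins\<close>

definition proj_extend :: "nat \<Rightarrow> complex mat \<Rightarrow> complex vec \<Rightarrow> complex mat"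
  where "proj_extend n P v = (let w = v - P *\<^sub>v v in
     if w = 0\<^sub>v n then P else P + (1 / (w \<bullet>c w)) \<cdot>\<^sub>m outer_mat n w)"

fun span_proj :: "nat \<Rightarrow> complex vec list \<Rightarrow> complex mat" where
  "span_proj n [] = 0\<^sub>m n n"
| "span_proj n (v # vs) = proj_extend n (span_proj n vs) v"

lemma proj_mat_proj_extend:
  assumes P: "proj_mat n P" and v: "v \<in> carrier_vec n"
  shows "proj_mat n (proj_extend n P v)"
proof -
  have "v - P *\<^sub>v v \<in> carrier_vec n" using proj_mat_carrier[OF P] v by simp
  then show ?thesis
    using proj_mat_add_smult_outer_mat[OF P _ _ proj_mat_mult_vec_residual[OF P v]] P
    by (simp add: proj_extend_def Let_def)
qed

lemma proj_extend_fixes: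
  assumes P: "proj_mat n P" and v: "v \<in> carrier_vec n" and u: "u \<in> carrier_vec n"
    and fixed: "u = v \<or> P *\<^sub>v u = u"
  shows "proj_extend n P v *\<^sub>v u = u"
proof -
  define w where "w = v - P *\<^sub>v v"
  have Pc: "P \<in> carrier_mat n n" using P by (rule proj_mat_carrier)
  have w: "w \<in> carrier_vec n" using Pc v by (simp add: w_def)
  show ?thesis
  proof (cases "w = 0\<^sub>v n")
    case True
    then have "proj_extend n P v = P" by (simp add: proj_extend_def w_def[symmetric])
    moreover have "P *\<^sub>v v = v" using eq_vec_if_diff_eq_0[of v n "P *\<^sub>v v"] True Pc v by (simp add: w_def)
    ultimately show ?thesis using fixed by auto
  next
    case False
    define c where "c = 1 / (w \<bullet>c w)"
    have "proj_extend n P v = P + c \<cdot>\<^sub>m outer_mat n w"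
      using False by (simp add: proj_extend_def w_def[symmetric] c_def)
    then have app: "proj_extend n P v *\<^sub>v z = P *\<^sub>v z + (c * (z \<bullet>c w)) \<cdot>\<^sub>v w" if "z \<in> carrier_vec n" for z
      using add_smult_outer_mat_mult_vec[OF Pc w that] by simp
    have orth: "(P *\<^sub>v y) \<bullet>c w = 0" if "y \<in> carrier_vec n" for y
      using cscalar_prod_hermitian_mat[OF proj_mat_hermitian[OF P] that w]
        proj_mat_mult_vec_residual[OF P v] that by (simp add: w_def)
    from fixed show ?thesis
    proof
      assume "u = v"
      have "v = w + 1 \<cdot>\<^sub>v (P *\<^sub>v v)" using v Pc by (intro eq_vecI) (auto simp: w_def)
      then have "v \<bullet>c w = w \<bullet>c w"
        using cscalar_prod_add_smult[OF w _ w, of "P *\<^sub>v v" 1] orth[OF v] Pc v by simp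
      then have "c * (v \<bullet>c w) = 1" using False w by (simp add: c_def)
      then have "proj_extend n P v *\<^sub>v v = P *\<^sub>v v + 1 \<cdot>\<^sub>v w" unfolding app[OF v] by simp
      also have "\<dots> = v" using v Pc by (intro eq_vecI) (auto simp: w_def)
      finally show ?thesis using \<open>u = v\<close> by simp
    next
      assume Pu: "P *\<^sub>v u = u"
      then have "u \<bullet>c w = 0" using orth[OF u] by simp
      then show ?thesis unfolding app[OF u] Pu using u w by (intro eq_vecI) auto
    qed
  qed
qed

lemma mat_range_proj_extend_subset:
  assumes P: "proj_mat n P" and X: "X \<in> carrier_mat n n"
    and PX: "mat_range n P \<subseteq> mat_range n X" and vX: "v \<in> mat_range n X"
  shows "mat_range n (proj_extend n P v) \<subseteq> mat_range n X"
proof -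
  define w where "w = v - P *\<^sub>v v"
  have Pc: "P \<in> carrier_mat n n" using P by (rule proj_mat_carrier)
  have v: "v \<in> carrier_vec n" using vX X unfolding mat_range_def by auto
  have "w \<in> mat_range n X"
    unfolding w_def using vX PX mult_mat_vec_in_mat_range[OF Pc v] by (intro mat_range_diff[OF X]) auto
  then have "P *\<^sub>v z + c \<cdot>\<^sub>v w \<in> mat_range n X" if "z \<in> carrier_vec n" for z c
    using PX mult_mat_vec_in_mat_range[OF Pc that] by (intro mat_range_add_smult[OF X]) auto
  moreover have "w \<in> carrier_vec n" using Pc v by (simp add: w_def)
  ultimately have "mat_range n (P + c \<cdot>\<^sub>m outer_mat n w) \<subseteq> mat_range n X" for c
    unfolding mat_range_def[of n "P + c \<cdot>\<^sub>m outer_mat n w"]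
    using Pc by (auto simp: add_smult_outer_mat_mult_vec)
  then show ?thesis using PX by (simp add: proj_extend_def w_def[symmetric] Let_def)
qed

lemma proj_mat_span_proj: "set vs \<subseteq> carrier_vec n \<Longrightarrow> proj_mat n (span_proj n vs)"
  by (induction vs) (simp_all add: proj_mat_zero proj_mat_proj_extend)

lemma span_proj_fixes: "set vs \<subseteq> carrier_vec n \<Longrightarrow> u \<in> set vs \<Longrightarrow> span_proj n vs *\<^sub>v u = u"
proof (induction vs)
  case (Cons v vs)
  then show ?case by (auto intro!: proj_extend_fixes proj_mat_span_proj)
qed simp

lemma span_proj_mat_range_subset:
  assumes "set vs \<subseteq> carrier_vec n" and X: "X \<in> carrier_mat n n" and "set vs \<subseteq> mat_range n X"
  shows "mat_range n (span_proj n vs) \<subseteq> mat_range n X"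
  using assms(1,3)
proof (induction vs)
  case Nil
  have "0\<^sub>v n \<in> mat_range n X" using mult_mat_vec_in_mat_range[OF X, of "0\<^sub>v n"] X by simp
  then show ?case by (simp add: mat_range_zero_mat)
next
  case (Cons v vs)
  then show ?case by (simp add: mat_range_proj_extend_subset[OF proj_mat_span_proj X])
qed

lemma span_proj_single:
  assumes "u \<in> carrier_vec n" "u \<noteq> 0\<^sub>v n"
  shows "span_proj n [u] = (1 / (u \<bullet>c u)) \<cdot>\<^sub>m outer_mat n u"
  using assms by (simp add: proj_extend_def Let_def)

lemma ex1_supp:
  assumes x: "x \<in> carrier_mat n n"
  shows "\<exists>!P. proj_mat n P \<and> mat_range n P = mat_range n x"
proof -
  define P where "P = span_proj n (cols x)"
  have cols: "set (cols x) = {col x j | j. j < n}" using x by (rule set_cols_carrier)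
  then have cols_carrier: "set (cols x) \<subseteq> carrier_vec n" using x by auto
  have P: "proj_mat n P" unfolding P_def by (rule proj_mat_span_proj[OF cols_carrier])
  have "mat_range n P \<subseteq> mat_range n x"
    unfolding P_def using cols col_in_mat_range[OF x]
    by (intro span_proj_mat_range_subset[OF cols_carrier x]) auto
  moreover have "P * x = x"
    using proj_mat_carrier[OF P] x cols span_proj_fixes[OF cols_carrier]
    by (intro mult_mat_eq_if_fixes_cols) (auto simp: P_def)
  then have "mat_range n x \<subseteq> mat_range n P" using mat_range_subset_iff[OF P x] by simp
  ultimately have "proj_mat n P \<and> mat_range n P = mat_range n x" using P by blast
  then show ?thesis using proj_mat_eq_if_mat_range_eq by (intro ex1I[of _ P]) auto
qed

lemma proj_mat_supp: "x \<in> carrier_mat n n \<Longrightarrow> proj_mat n (supp n x)"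
  unfolding supp_def using theI'[OF ex1_supp] by blast

lemma mat_range_supp: "x \<in> carrier_mat n n \<Longrightarrow> mat_range n (supp n x) = mat_range n x"
  unfolding supp_def using theI'[OF ex1_supp] by blast

lemma supp_eq_0_iff:
  assumes x: "x \<in> carrier_mat n n"
  shows "supp n x = 0\<^sub>m n n \<longleftrightarrow> x = 0\<^sub>m n n"
proof
  assume "supp n x = 0\<^sub>m n n"
  then have "mat_range n x = {0\<^sub>v n}" using mat_range_supp[OF x] by (simp add: mat_range_zero_mat)
  then have "x *\<^sub>v v = 0\<^sub>v n" if "v \<in> carrier_vec n" for v
    using mult_mat_vec_in_mat_range[OF x that] by simp
  then show "x = 0\<^sub>m n n" using x by (intro eq_mat_if_mult_vec_eq) auto
next
  assume "x = 0\<^sub>m n n"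
  then show "supp n x = 0\<^sub>m n n"
    using proj_mat_eq_if_mat_range_eq[OF proj_mat_supp[OF x] proj_mat_zero] mat_range_supp[OF x] by simp
qed

definition is_proj_join :: "nat \<Rightarrow> complex mat set \<Rightarrow> complex mat \<Rightarrow> bool"
  where "is_proj_join n S J \<longleftrightarrow> proj_mat n J \<and> (\<forall>P\<in>S. loewner_le n P J) \<and>
     (\<forall>R. proj_mat n R \<and> (\<forall>P\<in>S. loewner_le n P R) \<longrightarrow> loewner_le n J R)"

lemma is_proj_join_unique:
  assumes "is_proj_join n S J" "is_proj_join n S J'"
  shows "J = J'"
proof -
  have J: "proj_mat n J" "proj_mat n J'" and "loewner_le n J J'" "loewner_le n J' J"
    using assms unfolding is_proj_join_def by blast+
  then have "mat_range n J = mat_range n J'"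
    by (intro subset_antisym) (simp_all add: loewner_le_proj_iff_mat_range)
  then show ?thesis using J by (rule proj_mat_eq_if_mat_range_eq[rotated 2])
qed

lemma is_proj_join_span_proj:
  assumes fin: "finite S" and S: "\<forall>P\<in>S. proj_mat n P"
  shows "\<exists>J. is_proj_join n S J"
proof -
  obtain Ps where Ps: "set Ps = S" using finite_list[OF fin] by blast
  define vs where "vs = concat (map cols Ps)"
  have Sc: "P \<in> carrier_mat n n" if "P \<in> S" for P using S that by (simp add: proj_mat_carrier)
  have vs: "set vs = (\<Union>P\<in>S. set (cols P))" unfolding vs_def using Ps by auto
  then have vs_carrier: "set vs \<subseteq> carrier_vec n" using Sc by (auto simp: set_cols_carrier[of _ n n])
  define Q where "Q = span_proj n vs"
  have Q: "proj_mat n Q" unfolding Q_def by (rule proj_mat_span_proj[OF vs_carrier])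
  have "loewner_le n P Q" if "P \<in> S" for P
  proof -
    have "col P j \<in> set vs" if "j < n" for j
      using vs \<open>P \<in> S\<close> that Sc by (auto simp: set_cols_carrier[of _ n n])
    then have "Q * P = P"
      using proj_mat_carrier[OF Q] Sc[OF that] span_proj_fixes[OF vs_carrier]
      by (intro mult_mat_eq_if_fixes_cols) (auto simp: Q_def)
    then show ?thesis using loewner_le_proj_iff[of n P Q] S that Q by blast
  qed
  moreover have "loewner_le n Q R" if R: "proj_mat n R" and ub: "\<forall>P\<in>S. loewner_le n P R" for R
  proof -
    have "col P j \<in> mat_range n R" if "P \<in> S" "j < n" for P j
      using col_in_mat_range[OF Sc[OF that(1)] that(2)] ub that S loewner_le_proj_iff_mat_range[OF _ R]
      by blast
    then have "set vs \<subseteq> mat_range n R" using vs Sc by (auto simp: set_cols_carrier[of _ n n])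
    then have "mat_range n Q \<subseteq> mat_range n R"
      unfolding Q_def by (rule span_proj_mat_range_subset[OF vs_carrier proj_mat_carrier[OF R]])
    then show ?thesis using loewner_le_proj_iff_mat_range[OF Q R] by blast
  qed
  ultimately show ?thesis using Q unfolding is_proj_join_def by blast
qed

lemma is_proj_join_proj_join:
  assumes "finite S" "\<forall>P\<in>S. proj_mat n P"
  shows "is_proj_join n S (proj_join n S)"
proof -
  have "\<exists>!J. is_proj_join n S J"
    using is_proj_join_span_proj[OF assms] is_proj_join_unique by blast
  then show ?thesis unfolding proj_join_def is_proj_join_def[symmetric] by (rule theI')
qed

section \<open>The defect of a subunital positive map\<close>

lemma positive_map_kernel_contains_proj:
  assumes pos: "positive_map n T" and x: "psd_mat n x" "x \<noteq> 0\<^sub>m n n" and Tx: "T x = 0\<^sub>m n n"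
  obtains p where "proj_mat n p" "p \<noteq> 0\<^sub>m n n" "mat_range n p \<subseteq> mat_range n x" "T p = 0\<^sub>m n n"
proof -
  have xc: "x \<in> carrier_mat n n" using x(1) by (rule psd_mat_carrier)
  obtain j where j: "j < n" "x $$ (j,j) \<noteq> 0" using psd_mat_eq_0_if_diag_eq_0[OF x(1)] x(2) by blast
  define u where "u = col x j"
  have u: "u \<in> carrier_vec n" "u \<noteq> 0\<^sub>v n"
    using xc j by (auto simp: u_def dest: arg_cong[where f = "\<lambda>v. v $ j"])
  define p where "p = span_proj n [u]"
  have p: "proj_mat n p" "p *\<^sub>v u = u"
    unfolding p_def using u by (simp_all add: proj_mat_span_proj span_proj_fixes del: span_proj.simps)
  have "p \<noteq> 0\<^sub>m n n" using p(2) u by auto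
  moreover have "mat_range n p \<subseteq> mat_range n x"
    unfolding p_def using u col_in_mat_range[OF xc j(1)]
    by (intro span_proj_mat_range_subset[OF _ xc]) (auto simp: u_def)
  moreover have "T p = 0\<^sub>m n n"
  proof -
    have "T (outer_mat n u) = 0\<^sub>m n n"
      using positive_map_eq_0_if_dominated[OF pos psd_mat_outer_mat xc _ Tx]
        psd_mat_diag_smult_minus_outer_mat[OF x(1) j(1)] by (simp add: u_def)
    moreover have "p = (1 / (u \<bullet>c u)) \<cdot>\<^sub>m outer_mat n u" unfolding p_def by (rule span_proj_single[OF u])
    ultimately show ?thesis using pos by (simp add: positive_map_def linear_map_mat_smult[of n T])
  qed
  ultimately show ?thesis using that p(1) by blast
qed

lemma defect_carrier: "linear_map_mat n T \<Longrightarrow> defect n T \<in> carrier_mat n n"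
  by (simp add: defect_def linear_map_mat_carrier minus_carrier_mat)

lemma psd_defect: "loewner_le n (T (1\<^sub>m n)) (1\<^sub>m n) \<Longrightarrow> psd_mat n (defect n T)"
  unfolding loewner_le_def defect_def by blast

lemma defect_eq_0_iff:
  assumes "linear_map_mat n T"
  shows "defect n T = 0\<^sub>m n n \<longleftrightarrow> T (1\<^sub>m n) = 1\<^sub>m n"
proof
  have T1: "T (1\<^sub>m n) \<in> carrier_mat n n" using assms by (simp add: linear_map_mat_carrier)
  assume d: "defect n T = 0\<^sub>m n n"
  show "T (1\<^sub>m n) = 1\<^sub>m n"
  proof (rule eq_matI)
    fix i j assume ij: "i < dim_row (1\<^sub>m n)" "j < dim_col (1\<^sub>m n)"
    then have "(1\<^sub>m n - T (1\<^sub>m n)) $$ (i,j) = 0" using d by (simp add: defect_def)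
    then show "T (1\<^sub>m n) $$ (i,j) = 1\<^sub>m n $$ (i,j)" using T1 ij by simp
  qed (use T1 in auto)
qed (auto simp: defect_def intro!: eq_matI)

lemma stab_index_spec:
  assumes "finite_stab_index n T"
  shows "1 \<le> stab_index n T" and "(T ^^ stab_index n T) (defect n T) = 0\<^sub>m n n"
proof -
  obtain m where "m \<ge> 1 \<and> (T ^^ m) (defect n T) = 0\<^sub>m n n"
    using assms unfolding finite_stab_index_def by blast
  then have "stab_index n T \<ge> 1 \<and> (T ^^ stab_index n T) (defect n T) = 0\<^sub>m n n"
    unfolding stab_index_def by (rule LeastI)
  then show "1 \<le> stab_index n T" and "(T ^^ stab_index n T) (defect n T) = 0\<^sub>m n n" by auto
qed

lemma funpow_pred_stab_index:
  assumes fin: "finite_stab_index n T" and nz: "defect n T \<noteq> 0\<^sub>m n n"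
  shows "(T ^^ (stab_index n T - 1)) (defect n T) \<noteq> 0\<^sub>m n n"
    and "T ((T ^^ (stab_index n T - 1)) (defect n T)) = 0\<^sub>m n n"
proof -
  have "Suc (stab_index n T - 1) = stab_index n T" using stab_index_spec(1)[OF fin] by simp
  then show "T ((T ^^ (stab_index n T - 1)) (defect n T)) = 0\<^sub>m n n"
    using stab_index_spec(2)[OF fin] by (metis comp_apply funpow.simps(2))
  show "(T ^^ (stab_index n T - 1)) (defect n T) \<noteq> 0\<^sub>m n n"
  proof (cases "stab_index n T - 1 = 0")
    case True
    then show ?thesis using nz by simp
  next
    case False
    have "stab_index n T - 1 < stab_index n T" using stab_index_spec(1)[OF fin] by simp
    then have "\<not> (stab_index n T - 1 \<ge> 1 \<and> (T ^^ (stab_index n T - 1)) (defect n T) = 0\<^sub>m n n)"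
      unfolding stab_index_def by (rule not_less_Least)
    then show ?thesis using False by simp
  qed
qed

lemma is_proj_join_orbit_support:
  assumes T: "linear_map_mat n T"
  shows "is_proj_join n {supp n ((T ^^ k) (defect n T)) | k. k < stab_index n T} (orbit_support n T)"
  unfolding orbit_support_def
proof (rule is_proj_join_proj_join)
  have "{supp n ((T ^^ k) (defect n T)) | k. k < stab_index n T} =
      (\<lambda>k. supp n ((T ^^ k) (defect n T))) ` {..<stab_index n T}" by auto
  then show "finite {supp n ((T ^^ k) (defect n T)) | k. k < stab_index n T}" by simp
  show "\<forall>P\<in>{supp n ((T ^^ k) (defect n T)) | k. k < stab_index n T}. proj_mat n P"
    using T by (auto intro!: proj_mat_supp funpow_linear_map_mat_carrier defect_carrier)
qed

lemma proj_mat_orbit_support: "linear_map_mat n T \<Longrightarrow> proj_mat n (orbit_support n T)"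
  using is_proj_join_orbit_support unfolding is_proj_join_def by blast

lemma supp_le_orbit_support:
  "linear_map_mat n T \<Longrightarrow> k < stab_index n T \<Longrightarrow>
    loewner_le n (supp n ((T ^^ k) (defect n T))) (orbit_support n T)"
  using is_proj_join_orbit_support unfolding is_proj_join_def by blast

lemma orbit_support_eq_0_if_defect_eq_0:
  assumes T: "linear_map_mat n T" and d: "defect n T = 0\<^sub>m n n"
  shows "orbit_support n T = 0\<^sub>m n n"
proof -
  have "supp n ((T ^^ k) (defect n T)) = 0\<^sub>m n n" for k
    using d supp_eq_0_iff[of "0\<^sub>m n n" n] by (simp add: funpow_linear_map_mat_zero[OF T])
  moreover have "loewner_le n (0\<^sub>m n n) (0\<^sub>m n n)"
    using loewner_le_proj_iff[OF proj_mat_zero proj_mat_zero] by simp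
  ultimately have "loewner_le n (orbit_support n T) (0\<^sub>m n n)"
    using is_proj_join_orbit_support[OF T] proj_mat_zero unfolding is_proj_join_def by auto
  then show ?thesis using proj_mat_le_zero[OF proj_mat_orbit_support[OF T]] by blast
qed

lemma corner_faithful_if_orbit_support_eq_0:
  assumes "orbit_support n T = 0\<^sub>m n n"
  shows "corner_faithful n T"
  unfolding corner_faithful_def
proof (intro allI impI)
  fix x assume x: "psd_mat n x \<and> x \<noteq> 0\<^sub>m n n \<and> loewner_le n (supp n x) (orbit_support n T)"
  then have xc: "x \<in> carrier_mat n n" by (simp add: psd_mat_carrier)
  then have "supp n x = 0\<^sub>m n n" using proj_mat_le_zero[OF proj_mat_supp[OF xc]] x assms by simp
  then show "T x \<noteq> 0\<^sub>m n n" using supp_eq_0_iff[OF xc] x by simp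
qed

lemma defect_eq_0_if_faithful_on_orbit_support:
  assumes pos: "positive_map n T" and subunital: "loewner_le n (T (1\<^sub>m n)) (1\<^sub>m n)"
    and fin: "finite_stab_index n T"
    and faithful: "\<forall>p. proj_mat n p \<and> p \<noteq> 0\<^sub>m n n \<and> loewner_le n p (orbit_support n T) \<longrightarrow> T p \<noteq> 0\<^sub>m n n"
  shows "defect n T = 0\<^sub>m n n"
proof (rule ccontr)
  assume "defect n T \<noteq> 0\<^sub>m n n"
  define x where "x = (T ^^ (stab_index n T - 1)) (defect n T)"
  have T: "linear_map_mat n T" using pos by (simp add: positive_map_def)
  have x: "psd_mat n x" "x \<noteq> 0\<^sub>m n n" "T x = 0\<^sub>m n n"
    unfolding x_def using funpow_pred_stab_index[OF fin \<open>defect n T \<noteq> 0\<^sub>m n n\<close>]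
      funpow_positive_map_psd[OF pos psd_defect[of n T, OF subunital]] by auto
  have xc: "x \<in> carrier_mat n n" using x(1) by (rule psd_mat_carrier)
  obtain p where p: "proj_mat n p" "p \<noteq> 0\<^sub>m n n" "mat_range n p \<subseteq> mat_range n x" "T p = 0\<^sub>m n n"
    using positive_map_kernel_contains_proj[OF pos x] by blast
  have "stab_index n T - 1 < stab_index n T" using stab_index_spec(1)[OF fin] by simp
  then have "loewner_le n (supp n x) (orbit_support n T)"
    unfolding x_def by (rule supp_le_orbit_support[OF T])
  then have "mat_range n x \<subseteq> mat_range n (orbit_support n T)"
    using loewner_le_proj_iff_mat_range[OF proj_mat_supp[OF xc] proj_mat_orbit_support[OF T]]
      mat_range_supp[OF xc] by simp
  then have "loewner_le n p (orbit_support n T)"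
    using p(3) loewner_le_proj_iff_mat_range[OF p(1) proj_mat_orbit_support[OF T]] by blast
  then show False using faithful p by blast
qed

theorem proposition4p20:
  fixes d :: nat and T :: "complex mat \<Rightarrow> complex mat"
  assumes cp: "completely_positive d T"
    and subunital: "loewner_le d (T (1\<^sub>m d)) (1\<^sub>m d)"
    and fin: "finite_stab_index d T"
    and faithful_proj: "\<forall>p. proj_mat d p \<and> p \<noteq> 0\<^sub>m d d \<and> loewner_le d p (orbit_support d T)
                          \<longrightarrow> T p \<noteq> 0\<^sub>m d d"
  shows "corner_faithful d T \<and> T (1\<^sub>m d) = 1\<^sub>m d"
proof -
  have pos: "positive_map d T" using cp by (rule completely_positive_imp_positive_map)
  then have T: "linear_map_mat d T" by (simp add: positive_map_def)
  have "defect d T = 0\<^sub>m d d"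
    using defect_eq_0_if_faithful_on_orbit_support[OF pos subunital fin faithful_proj] .
  then show ?thesis
    using defect_eq_0_iff[OF T] orbit_support_eq_0_if_defect_eq_0[OF T]
      corner_faithful_if_orbit_support_eq_0 by blast
qed

end
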